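(* Let $X=\sum_{i=1}^n i\cdot X_i$, where $X_1,\dots,X_n$ are unknown independent Bernoulli random variables (the $i$-th weight is $i$). Let $L$ be any learning algorithm which, given $n$ and access to independent draws from $X$, outputs a hypothesis distribution $\hat{X}$ such that $d_{\mathrm{TV}}(\hat{X},X)\le 1/25$ with probability at least $e^{-o(n)}$ (for every such target $X$). Then $L$ must use $\Omega(n)$ samples.
   Context: For distributions $X,Y$ on a finite set $D$, $d_{\mathrm{TV}}(X,Y)=\frac12\sum_{\alpha\in D}|X(\alpha)-Y(\alpha)|$. *)

theory Defs
  imports "HOL-Probability.Probability" "HOL-Library.Landau_Symbols"
begin

definition dTV :: "nat pmf \<Rightarrow> nat pmf \<Rightarrow> real" where
  "dTV P Q = (1/2) * infsum (\<lambda>a. \<bar>pmf P a - pmf Q a\<bar>) UNIV"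

definition wsum_bern :: "nat \<Rightarrow> (nat \<Rightarrow> real) \<Rightarrow> nat pmf" where
  "wsum_bern n p = map_pmf (\<lambda>b. \<Sum>i\<in>{1..n}. if b i then i else 0)
      (Pi_pmf {1..n} False (\<lambda>i. bernoulli_pmf (p i)))"

definition samples :: "nat \<Rightarrow> nat pmf \<Rightarrow> (nat \<Rightarrow> nat) pmf" where
  "samples m X = Pi_pmf {..<m} 0 (\<lambda>_. X)"

definition success_prob ::
  "nat \<Rightarrow> ((nat \<Rightarrow> nat) \<Rightarrow> nat pmf pmf) \<Rightarrow> nat pmf \<Rightarrow> real \<Rightarrow> real" where
  "success_prob m A X eps =
     measure_pmf.prob (bind_pmf (samples m X) A) {H. dTV H X \<le> eps}"

end

theory Submission
  imports Defs
begin

text \<open>Consider the targets whose nonzero weights lie in the upper half \<open>H\<close> of \<open>{1..n}\<close>,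
  \<open>N = card H = n div 2\<close>, with \<open>p i = 1/N\<close> on a set \<open>T \<subseteq> H\<close> and \<open>p i = 0\<close> otherwise.
  Any two weights in \<open>H\<close> sum to more than \<open>n\<close>, so \<open>X_T\<close> puts mass at least \<open>1/(e N)\<close> on every
  point of \<open>T\<close> and none on \<open>H - T\<close>. Hence \<open>d_TV(X_S, X_T) \<ge> card (sym_diff S T) / (2 e N)\<close>, and one
  hypothesis is \<open>1/25\<close>-close to at most \<open>(9/5)^N (5/4)^(4N/9)\<close> of the \<open>2^N\<close> targets.
  Every \<open>X_T\<close> is pointwise at most \<open>e\<close> times the distribution with \<open>p i = 1/(N+1)\<close> on \<open>H\<close>, so
  \<open>m\<close> samples of \<open>X_T\<close> make any event at most \<open>e^m\<close> times likelier than \<open>m\<close> samples of that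
  one distribution. Summing the success probabilities over all \<open>T\<close> therefore gives
  \<open>2^N e^(-f) \<le> e^m (9/5)^N (5/4)^(4N/9)\<close>, i.e. \<open>m \<ge> \<gamma> N - f\<close> with
  \<open>\<gamma> = ln 2 - ln (9/5) - (4/9) ln (5/4) > 0\<close>.\<close>

lemma summable_on_pmf: "pmf P summable_on A"
  using abs_summable_equivalent abs_summable_summable pmf_abs_summable by blast

lemma summable_on_abs_diff_pmf: "(\<lambda>a. \<bar>pmf P a - pmf Q a\<bar>) summable_on A"
proof (rule summable_on_comparison_test)
  show "(\<lambda>a. pmf P a + pmf Q a) summable_on A"
    by (intro summable_on_add summable_on_pmf)
qed (auto simp: abs_le_iff)

lemma dTV_commute: "dTV P Q = dTV Q P"
  unfolding dTV_def by (simp add: abs_minus_commute)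

lemma dTV_triangle: "dTV P Q \<le> dTV P R + dTV R Q"
proof -
  have "infsum (\<lambda>a. \<bar>pmf P a - pmf Q a\<bar>) UNIV
      \<le> infsum (\<lambda>a. \<bar>pmf P a - pmf R a\<bar> + \<bar>pmf R a - pmf Q a\<bar>) UNIV"
    by (intro infsum_mono summable_on_abs_diff_pmf summable_on_add) auto
  also have "\<dots> = infsum (\<lambda>a. \<bar>pmf P a - pmf R a\<bar>) UNIV + infsum (\<lambda>a. \<bar>pmf R a - pmf Q a\<bar>) UNIV"
    by (intro infsum_add summable_on_abs_diff_pmf)
  finally show ?thesis
    unfolding dTV_def by simp
qed

lemma sum_abs_diff_pmf_le_dTV:
  assumes "finite F"
  shows "(\<Sum>a\<in>F. \<bar>pmf P a - pmf Q a\<bar>) / 2 \<le> dTV P Q"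
proof -
  have "(\<Sum>a\<in>F. \<bar>pmf P a - pmf Q a\<bar>) = infsum (\<lambda>a. \<bar>pmf P a - pmf Q a\<bar>) F"
    using assms by simp
  also have "\<dots> \<le> infsum (\<lambda>a. \<bar>pmf P a - pmf Q a\<bar>) UNIV"
    by (intro infsum_mono_neutral summable_on_abs_diff_pmf) auto
  finally show ?thesis
    unfolding dTV_def by simp
qed

lemma nn_integral_pmf_le_mult:
  assumes "\<And>x. pmf M x \<le> C * pmf M' x" "0 \<le> C"
  shows "(\<integral>\<^sup>+x. f x \<partial>M) \<le> ennreal C * (\<integral>\<^sup>+x. f x \<partial>M')"
proof -
  have "(\<integral>\<^sup>+x. f x \<partial>M) = \<integral>\<^sup>+x. ennreal (pmf M x) * f x \<partial>count_space UNIV"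
    by (rule nn_integral_measure_pmf)
  also have "\<dots> \<le> \<integral>\<^sup>+x. ennreal C * (ennreal (pmf M' x) * f x) \<partial>count_space UNIV"
  proof (intro nn_integral_mono)
    fix x
    have "ennreal (pmf M x) \<le> ennreal C * ennreal (pmf M' x)"
      using assms by (simp add: ennreal_mult[symmetric])
    then show "ennreal (pmf M x) * f x \<le> ennreal C * (ennreal (pmf M' x) * f x)"
      by (simp add: mult.assoc[symmetric] mult_right_mono)
  qed
  also have "\<dots> = ennreal C * (\<integral>\<^sup>+x. f x \<partial>M')"
    by (simp add: nn_integral_cmult nn_integral_measure_pmf)
  finally show ?thesis .
qed

lemma pmf_map_le_mult:
  assumes "\<And>x. pmf M x \<le> C * pmf M' x" "0 \<le> C"
  shows "pmf (map_pmf g M) y \<le> C * pmf (map_pmf g M') y"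
proof -
  have "ennreal (pmf (map_pmf g M) y) = (\<integral>\<^sup>+x. indicator (g -` {y}) x \<partial>M)"
    by (simp add: pmf_map measure_pmf.emeasure_eq_measure[symmetric])
  also have "\<dots> \<le> ennreal C * (\<integral>\<^sup>+x. indicator (g -` {y}) x \<partial>M')"
    by (rule nn_integral_pmf_le_mult[OF assms])
  also have "\<dots> = ennreal (C * pmf (map_pmf g M') y)"
    using assms(2) by (simp add: pmf_map measure_pmf.emeasure_eq_measure ennreal_mult)
  finally show ?thesis
    using assms(2) by simp
qed

lemma pmf_Pi_le_prod_mult:
  assumes "finite A" "\<And>i x. i \<in> A \<Longrightarrow> pmf (p i) x \<le> c i * pmf (q i) x"
    "\<And>i. i \<in> A \<Longrightarrow> 0 \<le> c i"
  shows "pmf (Pi_pmf A d p) f \<le> (\<Prod>i\<in>A. c i) * pmf (Pi_pmf A d q) f"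
proof (cases "\<forall>x. x \<notin> A \<longrightarrow> f x = d")
  case True
  have "(\<Prod>i\<in>A. pmf (p i) (f i)) \<le> (\<Prod>i\<in>A. c i * pmf (q i) (f i))"
    using assms by (intro prod_mono) auto
  then show ?thesis
    using True assms(1) by (simp add: pmf_Pi prod.distrib)
qed (use assms(1) in \<open>auto simp: pmf_Pi\<close>)

lemma pmf_samples_le_mult:
  assumes "\<And>x. pmf X x \<le> C * pmf Y x" "0 \<le> C"
  shows "pmf (samples m X) s \<le> C ^ m * pmf (samples m Y) s"
  using pmf_Pi_le_prod_mult[of "{..<m}" "\<lambda>_. X" "\<lambda>_. C"] assms
  unfolding samples_def by simp

lemma pmf_wsum_bern_le_mult:
  assumes "\<And>i x. i \<in> {1..n} \<Longrightarrow> pmf (bernoulli_pmf (p i)) x \<le> c i * pmf (bernoulli_pmf (q i)) x"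
    "\<And>i. i \<in> {1..n} \<Longrightarrow> 0 \<le> c i"
  shows "pmf (wsum_bern n p) v \<le> (\<Prod>i\<in>{1..n}. c i) * pmf (wsum_bern n q) v"
  unfolding wsum_bern_def
  by (intro pmf_map_le_mult pmf_Pi_le_prod_mult prod_nonneg) (use assms in auto)

lemma sum_prob_bind_pmf_le:
  fixes P :: "'t set" and Q :: "'t \<Rightarrow> 's pmf" and B :: "'t \<Rightarrow> 'h set" and A :: "'s \<Rightarrow> 'h pmf"
  assumes "finite P"
    and dominated: "\<And>T s. T \<in> P \<Longrightarrow> pmf (Q T) s \<le> C * pmf Q0 s" and "0 \<le> C"
    and overlap: "\<And>h. real (card {T\<in>P. h \<in> B T}) \<le> K"
  shows "(\<Sum>T\<in>P. measure (bind_pmf (Q T) A) (B T)) \<le> C * K"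
proof -
  have "0 \<le> K"
    using overlap[of undefined] of_nat_0_le_iff order_trans by blast
  have overlap_ennreal: "(\<Sum>T\<in>P. indicator (B T) h :: ennreal) \<le> ennreal K" for h
  proof -
    have "(\<Sum>T\<in>P. indicator (B T) h :: ennreal) = ennreal (real (card {T\<in>P. h \<in> B T}))"
      using \<open>finite P\<close>
      by (simp add: indicator_def sum.If_cases Int_def conj_commute ennreal_of_nat_eq_real_of_nat)
    then show ?thesis
      using overlap by (simp add: ennreal_leI)
  qed
  have "(\<Sum>T\<in>P. emeasure (A s) (B T)) \<le> ennreal K" for s
  proof -
    have "(\<Sum>T\<in>P. emeasure (A s) (B T)) = \<integral>\<^sup>+h. (\<Sum>T\<in>P. indicator (B T) h) \<partial>A s"
      by (simp add: nn_integral_sum)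
    also have "\<dots> \<le> \<integral>\<^sup>+h. ennreal K \<partial>A s"
      by (intro nn_integral_mono overlap_ennreal)
    finally show ?thesis
      by simp
  qed
  then have "\<integral>\<^sup>+s. (\<Sum>T\<in>P. emeasure (A s) (B T)) \<partial>Q0 \<le> \<integral>\<^sup>+s. ennreal K \<partial>Q0"
    by (intro nn_integral_mono)
  then have overlap_Q0: "(\<Sum>T\<in>P. \<integral>\<^sup>+s. emeasure (A s) (B T) \<partial>Q0) \<le> ennreal K"
    by (simp add: nn_integral_sum)
  have "ennreal (\<Sum>T\<in>P. measure (bind_pmf (Q T) A) (B T))
      = (\<Sum>T\<in>P. emeasure (bind_pmf (Q T) A) (B T))"
    by (simp add: measure_pmf.emeasure_eq_measure sum_ennreal)
  also have "\<dots> = (\<Sum>T\<in>P. \<integral>\<^sup>+s. emeasure (A s) (B T) \<partial>Q T)"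
    by simp
  also have "\<dots> \<le> (\<Sum>T\<in>P. ennreal C * \<integral>\<^sup>+s. emeasure (A s) (B T) \<partial>Q0)"
    by (intro sum_mono nn_integral_pmf_le_mult dominated \<open>0 \<le> C\<close>)
  also have "\<dots> \<le> ennreal C * ennreal K"
    using overlap_Q0 by (simp add: sum_distrib_left[symmetric] mult_left_mono)
  finally show ?thesis
    using \<open>0 \<le> C\<close> \<open>0 \<le> K\<close> by (simp add: ennreal_mult[symmetric] ennreal_le_iff)
qed

lemma sum_Pow_power_card:
  fixes x :: "'a :: comm_semiring_1"
  assumes "finite A"
  shows "(\<Sum>D\<in>Pow A. x ^ card D) = (1 + x) ^ card A"
  using prod_add[OF assms, of "\<lambda>_. x" "\<lambda>_. 1"] by (simp add: add.commute)

lemma card_small_subsets_le: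
  fixes x r :: real
  assumes "finite A" "0 < x" "x \<le> 1"
  shows "real (card {D\<in>Pow A. real (card D) \<le> r}) * x powr r \<le> (1 + x) ^ card A"
proof -
  have "real (card {D\<in>Pow A. real (card D) \<le> r}) * x powr r = (\<Sum>D\<in>{D\<in>Pow A. real (card D) \<le> r}. x powr r)"
    by simp
  also have "\<dots> \<le> (\<Sum>D\<in>{D\<in>Pow A. real (card D) \<le> r}. x ^ card D)"
    using assms by (intro sum_mono) (auto simp: powr_realpow[symmetric] intro: powr_mono')
  also have "\<dots> \<le> (\<Sum>D\<in>Pow A. x ^ card D)"
    using assms by (intro sum_mono2) auto
  finally show ?thesis
    using sum_Pow_power_card[OF \<open>finite A\<close>, of x] by simp
qed

lemma card_le_card_small_sym_diff:
  assumes "finite A" "Z \<subseteq> Pow A" "\<And>S T. S \<in> Z \<Longrightarrow> T \<in> Z \<Longrightarrow> real (card (sym_diff S T)) \<le> r"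
  shows "card Z \<le> card {D\<in>Pow A. real (card D) \<le> r}"
proof (cases "Z = {}")
  case False
  then obtain S where "S \<in> Z"
    by blast
  have "Z \<subseteq> sym_diff S ` {D\<in>Pow A. real (card D) \<le> r}"
  proof
    fix T
    assume "T \<in> Z"
    then have "sym_diff S T \<in> {D\<in>Pow A. real (card D) \<le> r}" "T = sym_diff S (sym_diff S T)"
      using assms \<open>S \<in> Z\<close> by auto
    then show "T \<in> sym_diff S ` {D\<in>Pow A. real (card D) \<le> r}"
      by blast
  qed
  moreover have "finite {D\<in>Pow A. real (card D) \<le> r}"
    using \<open>finite A\<close> by simp
  ultimately show ?thesis
    by (meson card_image_le card_mono finite_imageI order_trans)
qed simp

lemma pmf_wsum_bern_ge_single:
  assumes "v \<in> {1..n}" "\<forall>i\<in>{1..n}. 0 \<le> p i \<and> p i \<le> 1"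
  shows "p v * (\<Prod>i\<in>{1..n}-{v}. 1 - p i) \<le> pmf (wsum_bern n p) v"
proof -
  let ?M = "Pi_pmf {1..n} False (\<lambda>i. bernoulli_pmf (p i))"
  let ?g = "\<lambda>b. \<Sum>i\<in>{1..n}. if b i then i else (0::nat)"
  have "pmf ?M (\<lambda>i. i = v) = (\<Prod>i\<in>{1..n}. if i = v then p v else 1 - p i)"
    using assms by (auto simp: pmf_Pi intro!: prod.cong)
  also have "\<dots> = p v * (\<Prod>i\<in>{1..n}-{v}. if i = v then p v else 1 - p i)"
    using assms(1) by (subst prod.remove[of _ v]) auto
  also have "(\<Prod>i\<in>{1..n}-{v}. if i = v then p v else 1 - p i) = (\<Prod>i\<in>{1..n}-{v}. 1 - p i)"
    by (intro prod.cong) auto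
  finally have "p v * (\<Prod>i\<in>{1..n}-{v}. 1 - p i) = measure ?M {\<lambda>i. i = v}"
    by (simp add: measure_pmf_single)
  also have "\<dots> \<le> measure ?M (?g -` {v})"
  proof (intro measure_pmf.finite_measure_mono)
    show "{\<lambda>i. i = v} \<subseteq> ?g -` {v}"
      using assms(1) by (simp add: sum.delta')
  qed simp
  finally show ?thesis
    unfolding wsum_bern_def pmf_map .
qed

lemma card_le_1_if_sum_le_and_gt_half:
  fixes A :: "nat set"
  assumes "finite A" "\<And>i. i \<in> A \<Longrightarrow> n < 2 * i" "\<Sum>A \<le> n"
  shows "card A \<le> 1"
proof (rule ccontr)
  assume "\<not> card A \<le> 1"
  then obtain a c where "a \<in> A" "c \<in> A" "a \<noteq> c"
    using card_le_Suc0_iff_eq[OF \<open>finite A\<close>] by auto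
  then have "a + c \<le> \<Sum>A"
    using sum_mono2[OF \<open>finite A\<close>, of "{a, c}" id] by auto
  moreover have "n < 2 * a" "n < 2 * c"
    using assms(2) \<open>a \<in> A\<close> \<open>c \<in> A\<close> by auto
  ultimately show False
    using assms(3) by linarith
qed

lemma pmf_wsum_bern_eq_0:
  assumes "\<forall>i\<in>{1..n}. i \<notin> T \<longrightarrow> p i = 0" "\<And>i. i \<in> T \<Longrightarrow> n < 2 * i"
    and "v \<in> {1..n}" "v \<notin> T"
  shows "pmf (wsum_bern n p) v = 0"
proof -
  let ?M = "Pi_pmf {1..n} False (\<lambda>i. bernoulli_pmf (p i))"
  have "(\<Sum>i\<in>{1..n}. if b i then i else 0) \<noteq> v" if "b \<in> set_pmf ?M" for b
  proof
    define A where "A = {i\<in>{1..n}. b i}"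
    assume sum_eq: "(\<Sum>i\<in>{1..n}. if b i then i else 0) = v"
    have "(\<Sum>i\<in>{1..n}. if b i then i else 0) = \<Sum>A"
      unfolding A_def by (rule sum.inter_filter[symmetric]) simp
    then have "\<Sum>A = v"
      using sum_eq by simp
    have "A \<subseteq> T"
    proof
      fix i
      assume "i \<in> A"
      then have i: "i \<in> {1..n}" "b i"
        by (simp_all add: A_def)
      moreover have "b \<in> PiE_dflt {1..n} False (\<lambda>i. set_pmf (bernoulli_pmf (p i)))"
        using that by (simp add: set_Pi_pmf comp_def)
      ultimately have "True \<in> set_pmf (bernoulli_pmf (p i))"
        unfolding PiE_dflt_def by force
      then show "i \<in> T"
        using assms(1) i(1) by (auto simp: set_pmf_iff)
    qed
    have "finite A"
      by (simp add: A_def)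
    moreover have "card A \<le> 1"
      using \<open>A \<subseteq> T\<close> assms(2,3) \<open>\<Sum>A = v\<close> \<open>finite A\<close> by (intro card_le_1_if_sum_le_and_gt_half[of A n]) auto
    moreover have "A \<noteq> {}"
      using \<open>\<Sum>A = v\<close> assms(3) by auto
    ultimately obtain a where "A = {a}"
      by (metis card_1_singletonE card_0_eq le_antisym less_one not_le)
    then show False
      using \<open>\<Sum>A = v\<close> \<open>A \<subseteq> T\<close> assms(4) by simp
  qed
  then show ?thesis
    unfolding wsum_bern_def pmf_map measure_pmf_zero_iff by auto
qed

lemma one_plus_inverse_power_le_exp_1: "0 < N \<Longrightarrow> (1 + 1 / real N) ^ N \<le> exp 1"
  using exp_ge_one_plus_x_over_n_power_n[where x=1 and n=N] by simp

lemma exp_minus_1_le_one_minus_inverse_power: "exp (-1) \<le> (1 - 1 / real N) ^ (N - 1)"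
proof (cases "N \<le> 1")
  case False
  then obtain k where "N = Suc k" "0 < k"
    by (cases N) auto
  then have "(1 - 1 / real N) * (1 + 1 / real k) = 1"
    by (simp add: divide_simps)
  then have "1 = (1 + 1 / real k) ^ k * (1 - 1 / real N) ^ (N - 1)"
    using \<open>N = Suc k\<close> by (simp add: power_mult_distrib[symmetric] mult.commute)
  also have "\<dots> \<le> exp 1 * (1 - 1 / real N) ^ (N - 1)"
    using one_plus_inverse_power_le_exp_1[OF \<open>0 < k\<close>] \<open>N = Suc k\<close> by (intro mult_right_mono) auto
  finally show ?thesis
    by (simp add: exp_minus field_simps)
qed (auto simp: exp_minus field_simps)

lemma ln_packing_constant_pos: "0 < ln 2 - ln (9/5) + 4/9 * ln (4/5::real)"
proof -
  have "ln ((9/5::real) ^ 9) < ln (2 ^ 9 * (4/5) ^ 4)"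
    by (subst ln_less_cancel_iff) (simp_all add: power_divide)
  also have "\<dots> = ln ((2::real) ^ 9) + ln ((4/5::real) ^ 4)"
    by (rule ln_mult_pos) auto
  finally show ?thesis
    using ln_realpow[of "2::real" 9] ln_realpow[of "9/5::real" 9] ln_realpow[of "4/5::real" 4] by simp
qed

definition upper_half :: "nat \<Rightarrow> nat set" where
  "upper_half n = {n - n div 2 + 1..n}"

definition rate_on :: "nat \<Rightarrow> nat set \<Rightarrow> nat \<Rightarrow> real" where
  "rate_on N T i = (if i \<in> T then 1 / real N else 0)"

lemma finite_upper_half [simp]: "finite (upper_half n)"
  by (simp add: upper_half_def)

lemma upper_half_subset: "upper_half n \<subseteq> {1..n}"
  by (auto simp: upper_half_def)

lemma card_upper_half: "card (upper_half n) = n div 2"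
  by (simp add: upper_half_def)

lemma double_gt_if_in_upper_half: "i \<in> upper_half n \<Longrightarrow> n < 2 * i"
  by (auto simp: upper_half_def)

lemma rate_on_bounds: "0 < N \<Longrightarrow> 0 \<le> rate_on N T i \<and> rate_on N T i \<le> 1"
  by (simp add: rate_on_def)

lemma pmf_wsum_bern_rate_on_ge:
  assumes "T \<subseteq> {1..n}" "card T \<le> N" "v \<in> T"
  shows "exp (-1) / real N \<le> pmf (wsum_bern n (rate_on N T)) v"
proof -
  have "finite T"
    using assms(1) finite_subset by blast
  then have "0 < N"
    using assms(2,3) card_gt_0_iff[of T] by auto
  have "(\<Prod>i\<in>{1..n}-{v}. 1 - rate_on N T i) = (\<Prod>i\<in>{1..n}-{v}. if i \<in> T then 1 - 1 / real N else 1)"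
    by (intro prod.cong) (auto simp: rate_on_def)
  also have "\<dots> = (1 - 1 / real N) ^ card (T - {v})"
  proof -
    have "({1..n} - {v}) \<inter> T = T - {v}"
      using assms(1) by blast
    then show ?thesis
      by (simp add: prod.If_cases)
  qed
  finally have prod_eq: "(\<Prod>i\<in>{1..n}-{v}. 1 - rate_on N T i) = (1 - 1 / real N) ^ card (T - {v})" .
  have "card (T - {v}) \<le> N - 1"
    using assms \<open>finite T\<close> by simp
  then have "(1 - 1 / real N) ^ (N - 1) \<le> (1 - 1 / real N) ^ card (T - {v})"
    using \<open>0 < N\<close> by (intro power_decreasing) auto
  then have "exp (-1) \<le> (\<Prod>i\<in>{1..n}-{v}. 1 - rate_on N T i)"
    unfolding prod_eq using exp_minus_1_le_one_minus_inverse_power[of N] by linarith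
  then have "exp (-1) / real N \<le> rate_on N T v * (\<Prod>i\<in>{1..n}-{v}. 1 - rate_on N T i)"
    using \<open>v \<in> T\<close> by (simp add: rate_on_def divide_right_mono)
  also have "\<dots> \<le> pmf (wsum_bern n (rate_on N T)) v"
    using assms \<open>0 < N\<close> rate_on_bounds by (intro pmf_wsum_bern_ge_single) auto
  finally show ?thesis .
qed

lemma pmf_wsum_bern_rate_on_eq_0:
  assumes "T \<subseteq> upper_half n" "v \<in> upper_half n" "v \<notin> T"
  shows "pmf (wsum_bern n (rate_on N T)) v = 0"
  using assms upper_half_subset[of n] double_gt_if_in_upper_half[of _ n]
  by (intro pmf_wsum_bern_eq_0[of n T]) (auto simp: rate_on_def)

lemma dTV_wsum_bern_rate_on_ge:
  assumes "S \<subseteq> upper_half n" "T \<subseteq> upper_half n" "n div 2 \<le> N"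
  shows "real (card (sym_diff S T)) * exp (-1) / (2 * real N)
    \<le> dTV (wsum_bern n (rate_on N S)) (wsum_bern n (rate_on N T))"
proof -
  have gap: "exp (-1) / real N \<le> \<bar>pmf (wsum_bern n (rate_on N U)) v - pmf (wsum_bern n (rate_on N V)) v\<bar>"
    if "U \<subseteq> upper_half n" "V \<subseteq> upper_half n" "v \<in> U" "v \<notin> V" for U V v
  proof -
    have "card U \<le> N"
      using card_mono[OF finite_upper_half \<open>U \<subseteq> upper_half n\<close>] card_upper_half assms(3) by simp
    then have "exp (-1) / real N \<le> pmf (wsum_bern n (rate_on N U)) v"
      using that upper_half_subset by (intro pmf_wsum_bern_rate_on_ge) blast+
    moreover have "pmf (wsum_bern n (rate_on N V)) v = 0"
      using that by (intro pmf_wsum_bern_rate_on_eq_0) auto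
    ultimately show ?thesis
      by simp
  qed
  have "real (card (sym_diff S T)) * (exp (-1) / real N)
      \<le> (\<Sum>v\<in>sym_diff S T. \<bar>pmf (wsum_bern n (rate_on N S)) v - pmf (wsum_bern n (rate_on N T)) v\<bar>)"
    using gap[OF assms(1,2)] gap[OF assms(2,1)] by (intro sum_bounded_below) (auto simp: abs_minus_commute)
  also have "\<dots> / 2 \<le> dTV (wsum_bern n (rate_on N S)) (wsum_bern n (rate_on N T))"
    using assms(1,2) by (intro sum_abs_diff_pmf_le_dTV) (auto intro: finite_subset)
  finally show ?thesis
    by (simp add: field_simps)
qed

lemma card_dTV_close_rate_on_le:
  assumes "n div 2 \<le> N" "0 < N"
  shows "card {T\<in>Pow (upper_half n). dTV G (wsum_bern n (rate_on N T)) \<le> 1/25}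
    \<le> card {D\<in>Pow (upper_half n). real (card D) \<le> 4 * real N / 9}"
proof (rule card_le_card_small_sym_diff)
  fix S T
  assume "S \<in> {T\<in>Pow (upper_half n). dTV G (wsum_bern n (rate_on N T)) \<le> 1/25}"
    and "T \<in> {T\<in>Pow (upper_half n). dTV G (wsum_bern n (rate_on N T)) \<le> 1/25}"
  then have "S \<subseteq> upper_half n" "T \<subseteq> upper_half n"
    and "dTV G (wsum_bern n (rate_on N S)) \<le> 1/25" "dTV G (wsum_bern n (rate_on N T)) \<le> 1/25"
    by auto
  moreover have "dTV (wsum_bern n (rate_on N S)) (wsum_bern n (rate_on N T))
      \<le> dTV G (wsum_bern n (rate_on N S)) + dTV G (wsum_bern n (rate_on N T))"
    using dTV_triangle[of "wsum_bern n (rate_on N S)" "wsum_bern n (rate_on N T)" G]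
      dTV_commute[of G "wsum_bern n (rate_on N S)"] by linarith
  ultimately have "real (card (sym_diff S T)) * exp (-1) / (2 * real N) \<le> 2/25"
    using dTV_wsum_bern_rate_on_ge[OF _ _ assms(1), of S T] by linarith
  then have "real (card (sym_diff S T)) \<le> 4/25 * exp 1 * real N"
    using \<open>0 < N\<close> by (simp add: exp_minus field_simps)
  also have "\<dots> \<le> 4/25 * (25/9) * real N"
    using e_less_272 by (intro mult_right_mono) auto
  finally show "real (card (sym_diff S T)) \<le> 4 * real N / 9"
    by simp
qed auto

lemma pmf_wsum_bern_rate_on_le_exp_1:
  assumes "T \<subseteq> upper_half n" "n div 2 = N" "0 < N"
  shows "pmf (wsum_bern n (rate_on N T)) v \<le> exp 1 * pmf (wsum_bern n (rate_on (N + 1) (upper_half n))) v"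
proof -
  define c where "c i = (if i \<in> upper_half n then 1 + 1 / real N else 1)" for i
  have "pmf (bernoulli_pmf (rate_on N T i)) b \<le> c i * pmf (bernoulli_pmf (rate_on (N + 1) (upper_half n) i)) b"
    for i b
    using assms \<open>0 < N\<close> by (cases b) (auto simp: c_def rate_on_def field_simps)
  then have "pmf (wsum_bern n (rate_on N T)) v
      \<le> (\<Prod>i\<in>{1..n}. c i) * pmf (wsum_bern n (rate_on (N + 1) (upper_half n))) v"
    by (intro pmf_wsum_bern_le_mult) (auto simp: c_def)
  also have "(\<Prod>i\<in>{1..n}. c i) = (1 + 1 / real N) ^ N"
    using upper_half_subset[of n] card_upper_half[of n] assms(2)
    by (simp add: c_def prod.If_cases Int_absorb1)
  also have "\<dots> \<le> exp 1"
    by (rule one_plus_inverse_power_le_exp_1[OF \<open>0 < N\<close>])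
  finally show ?thesis
    by (simp add: mult_right_mono)
qed

lemma sample_size_lower_bound:
  assumes "n div 2 = N" "0 < N"
    and learns: "\<And>T. T \<subseteq> upper_half n \<Longrightarrow> exp (- c) \<le> success_prob m A (wsum_bern n (rate_on N T)) (1/25)"
  shows "real N * (ln 2 - ln (9/5) + 4/9 * ln (4/5)) \<le> real m + c"
proof -
  define K where "K = real (card {D\<in>Pow (upper_half n). real (card D) \<le> 4 * real N / 9})"
  have "2 ^ N * exp (- c) = real (card (Pow (upper_half n))) * exp (- c)"
    using assms(1) by (simp add: card_Pow card_upper_half)
  also have "\<dots> \<le> (\<Sum>T\<in>Pow (upper_half n). success_prob m A (wsum_bern n (rate_on N T)) (1/25))"
    using learns by (intro sum_bounded_below) auto
  also have "\<dots> \<le> exp 1 ^ m * K"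
    unfolding success_prob_def K_def
  proof (rule sum_prob_bind_pmf_le)
    show "pmf (samples m (wsum_bern n (rate_on N T))) s
        \<le> exp 1 ^ m * pmf (samples m (wsum_bern n (rate_on (N + 1) (upper_half n)))) s"
      if "T \<in> Pow (upper_half n)" for T s
      using that assms(1,2) by (intro pmf_samples_le_mult pmf_wsum_bern_rate_on_le_exp_1) auto
    show "real (card {T\<in>Pow (upper_half n). H \<in> {G. dTV G (wsum_bern n (rate_on N T)) \<le> 1/25}})
        \<le> real (card {D\<in>Pow (upper_half n). real (card D) \<le> 4 * real N / 9})" for H
      using card_dTV_close_rate_on_le[of n N H] assms(1,2) by simp
  qed auto
  finally have "2 ^ N * exp (- c) * (4/5) powr (4 * real N / 9) \<le> exp 1 ^ m * (K * (4/5) powr (4 * real N / 9))"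
    by (simp add: mult_right_mono)
  also have "\<dots> \<le> exp 1 ^ m * (9/5) ^ N"
    using card_small_subsets_le[of "upper_half n" "4/5" "4 * real N / 9"] assms(1)
    by (intro mult_left_mono) (auto simp: K_def card_upper_half)
  finally have bound: "2 ^ N * exp (- c) * (4/5) powr (4 * real N / 9) \<le> exp 1 ^ m * (9/5) ^ N" .
  have "2 ^ N * exp (- c) * (4/5) powr (4 * real N / 9)
      = exp (real N * ln 2) * exp (- c) * exp (4 * real N / 9 * ln (4/5))"
    by (simp add: exp_of_nat_mult powr_def)
  also have "\<dots> = exp (real N * ln 2 + - c + 4 * real N / 9 * ln (4/5))"
    by (simp only: exp_add)
  finally have lhs_eq: "2 ^ N * exp (- c) * (4/5) powr (4 * real N / 9)
      = exp (real N * ln 2 + - c + 4 * real N / 9 * ln (4/5))" .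
  have rhs_eq: "exp 1 ^ m * (9/5) ^ N = exp (real m + real N * ln (9/5))"
    using exp_of_nat_mult[of m "1::real"] by (simp add: exp_add exp_of_nat_mult)
  from bound have "real N * ln 2 + - c + 4 * real N / 9 * ln (4/5) \<le> real m + real N * ln (9/5)"
    unfolding lhs_eq rhs_eq by simp
  then show ?thesis
    by (simp add: algebra_simps)
qed

theorem theorem3:
  fixes m :: "nat \<Rightarrow> nat"
    and L :: "nat \<Rightarrow> (nat \<Rightarrow> nat) \<Rightarrow> nat pmf pmf"
    and f :: "nat \<Rightarrow> real"
  assumes f_small: "f \<in> o(\<lambda>n. real n)"
    and learns: "\<And>n p. (\<forall>i\<in>{1..n}. 0 \<le> p i \<and> p i \<le> 1) \<Longrightarrow>
        success_prob (m n) (L n) (wsum_bern n p) (1/25) \<ge> exp (- f n)"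
  shows "(\<lambda>n. real (m n)) \<in> \<Omega>(\<lambda>n. real n)"
proof -
  define \<gamma> :: real where "\<gamma> = ln 2 - ln (9/5) + 4/9 * ln (4/5)"
  have "0 < \<gamma>"
    unfolding \<gamma>_def by (rule ln_packing_constant_pos)
  have "eventually (\<lambda>n. \<bar>f n\<bar> \<le> \<gamma>/4 * real n) at_top"
    using landau_o.smallD[OF f_small, of "\<gamma>/4"] \<open>0 < \<gamma>\<close> by simp
  moreover have "eventually (\<lambda>n::nat. 4 \<le> n) at_top"
    by (rule eventually_ge_at_top)
  ultimately have "eventually (\<lambda>n. \<gamma>/8 * real n \<le> real (m n)) at_top"
  proof eventually_elim
    case (elim n)
    have "real n - 1 \<le> 2 * real (n div 2)"
      by linarith
    then have "(real n - 1) / 2 * \<gamma> \<le> real (n div 2) * \<gamma>"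
      using \<open>0 < \<gamma>\<close> by (intro mult_right_mono) auto
    moreover have "0 < n div 2"
      using elim(2) by simp
    then have "exp (- f n) \<le> success_prob (m n) (L n) (wsum_bern n (rate_on (n div 2) T)) (1/25)" for T
      using rate_on_bounds by (intro learns) blast
    then have "real (n div 2) * \<gamma> \<le> real (m n) + f n"
      unfolding \<gamma>_def by (rule sample_size_lower_bound[OF refl \<open>0 < n div 2\<close>])
    moreover have "0 \<le> (real n - 4) * \<gamma>"
      using elim(2) \<open>0 < \<gamma>\<close> by simp
    ultimately show ?case
      using elim(1) by (simp add: algebra_simps)
  qed
  then show ?thesis
    using \<open>0 < \<gamma>\<close> by (intro landau_omega.bigI[of "\<gamma>/8"]) auto
qed

end
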